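(* For every $h\in\widehat{\operatorname{PC}^{\bowtie}}$ and every order-preserving homeomorphism $\phi$ of $[0,1[$, one has $\varepsilon(h\phi)=\varepsilon(h)=\varepsilon(\phi h)$.
   Context: $X=[0,1[$; $\widehat{\operatorname{PC}^{\bowtie}}$ is the group of bijections $X\to X$ continuous outside a finite subset, containing the group ${\mathfrak S}_{\mathrm{fin}}$ of finitely supported permutations with classical signature $\operatorname{sgn}$ valued in $\mathbb{Z}/2\mathbb{Z}$. For $h\in\widehat{\operatorname{PC}^{\bowtie}}$, a partition associated with $h$ is a finite partition $\mathcal P=\{I_1,\dots,I_n\}$ of $X$ into intervals $I_j=[\alpha_j,b_j[$ such that $h$ is continuous on $I_j^\circ=]\alpha_j,b_j[$ for each $j$ (so $h$ is strictly monotone there and $h(I_j^\circ)$ is an open interval). Let $\beta_j$ be the left endpoint of $h(I_j^\circ)$; $\{h(\alpha_j)\}=\{\beta_j\}$, and $\sigma_{(h,\mathcal P)}\in{\mathfrak S}_{\mathrm{fin}}$ sends $h(\alpha_j)$ to $\beta_j$ for each $j$ and fixes all other points. $R(h,\mathcal P)$ is the number of $j$ with $h$ decreasing on $I_j^\circ$, and $\varepsilon(h,\mathcal P)=R(h,\mathcal P)+\operatorname{sgn}(\sigma_{(h,\mathcal P)})\bmod 2$. There is a unique associated partition $\mathcal P^{\min}_h$ with the fewest intervals, every associated partition refines it, and $\varepsilon(h):=\varepsilon(h,\mathcal P^{\min}_h)$. *)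

theory Defs
  imports "HOL-Analysis.Analysis" "HOL-Combinatorics.Permutations"
begin

definition Xs :: "real set" where "Xs = {0..<1}"

definition PCbow :: "(real \<Rightarrow> real) \<Rightarrow> bool" where
  "PCbow h \<longleftrightarrow> bij_betw h Xs Xs \<and>
     (\<exists>F. finite F \<and> (\<forall>x\<in>Xs - F. continuous (at x within Xs) h))"

text \<open>A finite partition of X into intervals [a,b[ is encoded by the finite set P of
  left endpoints (0 \<in> P, P \<subseteq> X); the interval starting at a \<in> P ends at the next
  point of P, or at 1.\<close>
definition nxt :: "real set \<Rightarrow> real \<Rightarrow> real" where
  "nxt P a = (if \<exists>p\<in>P. a < p then Min {p\<in>P. a < p} else 1)"

definition is_partition :: "real set \<Rightarrow> bool" where
  "is_partition P \<longleftrightarrow> finite P \<and> 0 \<in> P \<and> P \<subseteq> Xs"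

definition assoc_partition :: "(real \<Rightarrow> real) \<Rightarrow> real set \<Rightarrow> bool" where
  "assoc_partition h P \<longleftrightarrow> is_partition P \<and>
     (\<forall>a\<in>P. continuous_on {a<..<nxt P a} h)"

definition beta_pt :: "(real \<Rightarrow> real) \<Rightarrow> real set \<Rightarrow> real \<Rightarrow> real" where
  "beta_pt h P a = Inf (h ` {a<..<nxt P a})"

definition sigma_hP :: "(real \<Rightarrow> real) \<Rightarrow> real set \<Rightarrow> real \<Rightarrow> real" where
  "sigma_hP h P x = (if x \<in> h ` P then beta_pt h P (THE a. a \<in> P \<and> h a = x) else x)"

definition R_hP :: "(real \<Rightarrow> real) \<Rightarrow> real set \<Rightarrow> nat" where
  "R_hP h P = card {a\<in>P. \<forall>x y. a < x \<longrightarrow> x < y \<longrightarrow> y < nxt P a \<longrightarrow> h y < h x}"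

definition sgn2 :: "(real \<Rightarrow> real) \<Rightarrow> nat" where
  "sgn2 s = (if evenperm s then 0 else 1)"

definition eps_hP :: "(real \<Rightarrow> real) \<Rightarrow> real set \<Rightarrow> nat" where
  "eps_hP h P = (R_hP h P + sgn2 (sigma_hP h P)) mod 2"

definition Pmin :: "(real \<Rightarrow> real) \<Rightarrow> real set" where
  "Pmin h = (THE P. assoc_partition h P \<and> (\<forall>Q. assoc_partition h Q \<longrightarrow> card P \<le> card Q))"

definition eps :: "(real \<Rightarrow> real) \<Rightarrow> nat" where
  "eps h = eps_hP h (Pmin h)"

end

theory Submission
  imports Defs
begin

text \<open>The minimal associated partition of h consists of 0 and the interior discontinuity
points of h. Precomposing with an increasing homeomorphism \<phi> of X (inverse \<psi>) moves these
points by \<psi>, and \<phi> carries each new piece onto the corresponding old one; so the pieces on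
which h is decreasing correspond, and the permutation \<sigma> is literally unchanged.
Postcomposing with \<phi> keeps the discontinuities and the monotonicity type of every piece,
and conjugates \<sigma> by \<phi>, which preserves the signature.\<close>

lemma swapidseq_conj:
  assumes "swapidseq n p" and "bij g"
  shows "swapidseq n (g \<circ> p \<circ> inv g)"
  using assms(1)
proof induction
  case id
  then show ?case
    using assms(2) by (simp add: fun_eq_iff bij_is_surj surj_f_inv_f)
next
  case (comp_Suc n p a b)
  have "g (Transposition.transpose a b x) = Transposition.transpose (g a) (g b) (g x)" for x
    using assms(2) by (auto simp: Transposition.transpose_def bij_def inj_eq)
  then have conj: "g \<circ> (Transposition.transpose a b \<circ> p) \<circ> inv g
      = Transposition.transpose (g a) (g b) \<circ> (g \<circ> p \<circ> inv g)"
    by (simp add: fun_eq_iff)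
  have "g a \<noteq> g b"
    using comp_Suc(2) assms(2) by (auto simp: bij_def inj_eq)
  then show ?case
    unfolding conj using swapidseq.comp_Suc[OF comp_Suc(3)] by blast
qed

text \<open>No finiteness of support is assumed: conjugation preserves every length in
  \<^const>\<open>swapidseq\<close>, so even the junk value of \<^const>\<open>evenperm\<close> on a
  non-permutation is invariant.\<close>

lemma evenperm_conj:
  assumes "bij g" and "q \<circ> g = g \<circ> p"
  shows "evenperm q = evenperm p"
proof -
  have q: "q = g \<circ> p \<circ> inv g"
    using assms by (metis bij_is_surj comp_assoc comp_id surj_iff)
  have p: "p = inv g \<circ> q \<circ> inv (inv g)"
    using assms by (simp add: q fun_eq_iff bij_is_inj inv_inv_eq bij_inv_eq_iff)
  have "swapidseq n q \<longleftrightarrow> swapidseq n p" for n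
    using swapidseq_conj[of n p g] swapidseq_conj[of n q "inv g"] assms(1) p q
    by (metis bij_imp_bij_inv)
  then show ?thesis
    unfolding evenperm_def by simp
qed

lemma isCont_cong_open:
  assumes "open U" and "x \<in> U" and "\<And>y. y \<in> U \<Longrightarrow> f y = g y"
  shows "isCont f x \<longleftrightarrow> isCont g x"
  using assms by (intro isCont_cong) (auto simp: eventually_nhds)

lemma isCont_comp_continuous_on:
  fixes f :: "'a::t2_space \<Rightarrow> 'b::t2_space" and g :: "'b \<Rightarrow> 'c::topological_space"
  assumes "continuous_on S g" and "open U" and "x \<in> U" and "f ` U \<subseteq> S" and "isCont f x"
  shows "isCont (g \<circ> f) x"
proof -
  have "continuous (at (f x) within S) g"
    using assms(1,3,4) continuous_on_eq_continuous_within by blast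
  then have "continuous (at (f x) within f ` U) g"
    using assms(4) by (rule continuous_within_subset)
  moreover have "continuous (at x within U) f"
    using assms(5) by (rule continuous_at_imp_continuous_within)
  ultimately have "continuous (at x within U) (g \<circ> f)"
    using continuous_within_compose2 by (auto simp: o_def)
  then show ?thesis
    using at_within_open[OF assms(3,2)] by simp
qed

lemma isCont_homeomorphism_comp_iff:
  fixes f :: "'a::t2_space \<Rightarrow> 'b::t2_space" and \<phi> :: "'b \<Rightarrow> 'c::t2_space"
  assumes "homeomorphism S T \<phi> \<psi>" and "open U" and "x \<in> U" and "f ` U \<subseteq> S"
  shows "isCont (\<phi> \<circ> f) x \<longleftrightarrow> isCont f x"
proof
  assume "isCont (\<phi> \<circ> f) x"
  moreover have "(\<phi> \<circ> f) ` U \<subseteq> T" "continuous_on T \<psi>"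
    using assms(1,4) by (auto simp: homeomorphism_def)
  ultimately have "isCont (\<psi> \<circ> (\<phi> \<circ> f)) x"
    using isCont_comp_continuous_on[of T \<psi> U x "\<phi> \<circ> f"] assms(2,3) by blast
  moreover have "(\<psi> \<circ> (\<phi> \<circ> f)) y = f y" if "y \<in> U" for y
    using assms(1,4) that by (auto simp: homeomorphism_def)
  ultimately show "isCont f x"
    using isCont_cong_open[OF assms(2,3)] by blast
next
  assume "isCont f x"
  moreover have "continuous_on S \<phi>"
    using assms(1) by (simp add: homeomorphism_def)
  ultimately show "isCont (\<phi> \<circ> f) x"
    using isCont_comp_continuous_on[of S \<phi> U x f] assms(2-4) by blast
qed

lemma isCont_comp_homeomorphism_iff:
  fixes \<phi> :: "'a::t2_space \<Rightarrow> 'b::t2_space"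
  assumes "homeomorphism U V \<phi> \<psi>" and "open U" and "open V" and "x \<in> U"
  shows "isCont (h \<circ> \<phi>) x \<longleftrightarrow> isCont h (\<phi> x)"
proof
  have "\<phi> x \<in> V" "\<psi> (\<phi> x) = x"
    using assms(1,4) by (auto simp: homeomorphism_def)
  have "isCont \<psi> (\<phi> x)"
    using assms(1,3) \<open>\<phi> x \<in> V\<close> by (simp add: homeomorphism_def continuous_on_eq_continuous_at)
  moreover assume "isCont (h \<circ> \<phi>) x"
  then have "isCont (h \<circ> \<phi>) (\<psi> (\<phi> x))"
    using \<open>\<psi> (\<phi> x) = x\<close> by simp
  ultimately have "isCont (h \<circ> \<phi> \<circ> \<psi>) (\<phi> x)"
    by (rule continuous_at_compose)
  moreover have "(h \<circ> \<phi> \<circ> \<psi>) y = h y" if "y \<in> V" for y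
    using assms(1) that by (simp add: homeomorphism_def)
  ultimately show "isCont h (\<phi> x)"
    using isCont_cong_open[OF assms(3) \<open>\<phi> x \<in> V\<close>] by blast
next
  have "isCont \<phi> x"
    using assms(1,2,4) by (simp add: homeomorphism_def continuous_on_eq_continuous_at)
  moreover assume "isCont h (\<phi> x)"
  ultimately show "isCont (h \<circ> \<phi>) x"
    by (rule continuous_at_compose)
qed

definition discont :: "(real \<Rightarrow> real) \<Rightarrow> real set" where
  "discont h = {x \<in> {0<..<1}. \<not> isCont h x}"

definition piece :: "real set \<Rightarrow> real \<Rightarrow> real set" where
  "piece P a = {a<..<nxt P a}"

lemma mem_piece_iff:
  assumes "finite P" and "P \<subseteq> Xs"
  shows "x \<in> piece P a \<longleftrightarrow> a < x \<and> x < 1 \<and> (\<forall>p\<in>P. a < p \<longrightarrow> x < p)"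
proof (cases "\<exists>p\<in>P. a < p")
  case True
  then obtain p where p: "p \<in> P" "a < p" by blast
  have "finite {p \<in> P. a < p}" "{p \<in> P. a < p} \<noteq> {}"
    using assms(1) p by auto
  then have "x < nxt P a \<longleftrightarrow> (\<forall>p\<in>P. a < p \<longrightarrow> x < p)"
    using True Min_gr_iff by (auto simp: nxt_def)
  moreover have "p < 1"
    using p assms(2) by (auto simp: Xs_def)
  ultimately show ?thesis
    using p by (auto simp: piece_def)
qed (auto simp: piece_def nxt_def)

lemma piece_nonempty:
  assumes "is_partition P" and "a \<in> P"
  shows "piece P a \<noteq> {}"
proof -
  have fin: "finite {p \<in> P. a < p}"
    using assms(1) by (simp add: is_partition_def)
  have "a < nxt P a"
  proof (cases "\<exists>p\<in>P. a < p")
    case True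
    then have "nxt P a \<in> {p \<in> P. a < p}"
      using Min_in[OF fin] by (auto simp: nxt_def)
    then show ?thesis by simp
  next
    case False
    then show ?thesis
      using assms by (auto simp: nxt_def is_partition_def Xs_def)
  qed
  then show ?thesis
    by (simp add: piece_def)
qed

lemma mem_piece_of_partition:
  assumes "is_partition P" and "x \<in> {0<..<1} - P"
  obtains a where "a \<in> P" and "x \<in> piece P a"
proof -
  have fin: "finite {p \<in> P. p < x}" and ne: "{p \<in> P. p < x} \<noteq> {}"
    using assms by (auto simp: is_partition_def)
  define a where "a = Max {p \<in> P. p < x}"
  have "a \<in> P" "a < x"
    using Max_in[OF fin ne] by (auto simp: a_def)
  moreover have "x < p" if "p \<in> P" "a < p" for p
  proof -
    have "p \<noteq> x"
      using that assms(2) by auto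
    then show ?thesis
      using that Max_ge[OF fin, of p] unfolding a_def by (cases "p < x") auto
  qed
  ultimately have "x \<in> piece P a"
    using assms mem_piece_iff[of P x a] by (auto simp: is_partition_def)
  then show ?thesis
    using \<open>a \<in> P\<close> that by blast
qed

lemma piece_subset_interior:
  assumes "is_partition P" and "a \<in> P"
  shows "piece P a \<subseteq> {0<..<1} - P"
proof
  fix x
  assume "x \<in> piece P a"
  moreover have "finite P" "P \<subseteq> Xs" "0 \<le> a"
    using assms by (auto simp: is_partition_def Xs_def)
  ultimately have "a < x" "x < 1" "\<forall>p\<in>P. a < p \<longrightarrow> x < p"
    using mem_piece_iff by blast+
  then show "x \<in> {0<..<1} - P"
    using \<open>0 \<le> a\<close> by auto
qed

lemma piece_subset_Xs:
  assumes "is_partition P" and "a \<in> P"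
  shows "piece P a \<subseteq> Xs"
  using piece_subset_interior[OF assms] by (auto simp: Xs_def)

lemma assoc_partition_iff_discont_subset:
  assumes "is_partition P"
  shows "assoc_partition h P \<longleftrightarrow> discont h \<subseteq> P"
proof -
  have "continuous_on (piece P a) h \<longleftrightarrow> (\<forall>x\<in>piece P a. isCont h x)" for a
    by (simp add: piece_def continuous_on_eq_continuous_at)
  moreover have "(\<forall>a\<in>P. \<forall>x\<in>piece P a. isCont h x) \<longleftrightarrow> discont h \<subseteq> P"
  proof
    assume cont: "\<forall>a\<in>P. \<forall>x\<in>piece P a. isCont h x"
    show "discont h \<subseteq> P"
    proof
      fix x
      assume x: "x \<in> discont h"
      show "x \<in> P"
      proof (rule ccontr)
        assume "x \<notin> P"
        with x obtain a where "a \<in> P" "x \<in> piece P a"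
          using mem_piece_of_partition[OF assms] by (auto simp: discont_def)
        then show False
          using cont x by (auto simp: discont_def)
      qed
    qed
  next
    assume "discont h \<subseteq> P"
    then show "\<forall>a\<in>P. \<forall>x\<in>piece P a. isCont h x"
      using piece_subset_interior[OF assms] unfolding discont_def by blast
  qed
  ultimately show ?thesis
    using assms by (simp add: assoc_partition_def piece_def)
qed

lemma is_partition_discont:
  assumes "finite (discont h)"
  shows "is_partition (insert 0 (discont h))"
  using assms by (auto simp: is_partition_def discont_def Xs_def)

lemma Pmin_eq:
  assumes "finite (discont h)"
  shows "Pmin h = insert 0 (discont h)"
proof -
  let ?P = "insert 0 (discont h)"
  have P: "assoc_partition h ?P"
    using assoc_partition_iff_discont_subset[OF is_partition_discont[OF assms]] by blast
  have least: "?P \<subseteq> Q" if "assoc_partition h Q" for Q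
  proof -
    have "is_partition Q"
      using that by (simp add: assoc_partition_def)
    then show ?thesis
      using that assoc_partition_iff_discont_subset[of Q h] by (simp add: is_partition_def)
  qed
  show ?thesis
    unfolding Pmin_def
  proof (rule the_equality)
    show "assoc_partition h ?P \<and> (\<forall>Q. assoc_partition h Q \<longrightarrow> card ?P \<le> card Q)"
    proof (intro conjI allI impI P)
      fix Q
      assume "assoc_partition h Q"
      then show "card ?P \<le> card Q"
        using least by (intro card_mono) (auto simp: assoc_partition_def is_partition_def)
    qed
  next
    fix Q
    assume Q: "assoc_partition h Q \<and> (\<forall>Q'. assoc_partition h Q' \<longrightarrow> card Q \<le> card Q')"
    then have "finite Q" "?P \<subseteq> Q" "card Q \<le> card ?P"
      using P least by (auto simp: assoc_partition_def is_partition_def)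
    then show "Q = ?P"
      using card_seteq by blast
  qed
qed

lemma finite_discont:
  assumes "PCbow h"
  shows "finite (discont h)"
proof -
  obtain F where F: "finite F" "\<forall>x\<in>Xs - F. continuous (at x within Xs) h"
    using assms by (auto simp: PCbow_def)
  have "isCont h x" if "x \<in> {0<..<1} - F" for x
  proof -
    have "continuous (at x within Xs) h"
      using F that by (auto simp: Xs_def)
    then have "continuous (at x within {0<..<1}) h"
      by (rule continuous_within_subset) (auto simp: Xs_def)
    then show ?thesis
      using that at_within_open[of x "{0<..<1}"] by simp
  qed
  then have "discont h \<subseteq> F"
    by (auto simp: discont_def)
  then show ?thesis
    using F(1) finite_subset by blast
qed

lemma Inf_mem_Xs:
  assumes "A \<subseteq> Xs" and "A \<noteq> {}"
  shows "Inf A \<in> Xs"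
proof -
  obtain a where "a \<in> A"
    using assms(2) by blast
  have "bdd_below A"
    using assms(1) by (intro bdd_belowI[of _ 0]) (auto simp: Xs_def)
  then have "Inf A \<le> a"
    using \<open>a \<in> A\<close> by (rule cInf_lower[rotated])
  moreover have "0 \<le> Inf A"
    using assms by (intro cInf_greatest) (auto simp: Xs_def)
  ultimately show ?thesis
    using \<open>a \<in> A\<close> assms(1) by (auto simp: Xs_def)
qed

lemma R_hP_eq: "R_hP h P = card {a \<in> P. strict_antimono_on (piece P a) h}"
  unfolding R_hP_def piece_def monotone_on_def by (rule arg_cong[where f = card]) auto

lemma sigma_hP_apply:
  assumes "inj_on h Xs" and "P \<subseteq> Xs" and "a \<in> P"
  shows "sigma_hP h P (h a) = Inf (h ` piece P a)"
proof -
  have "(THE b. b \<in> P \<and> h b = h a) = a"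
    using assms by (intro the_equality) (auto dest: inj_onD)
  then show ?thesis
    using assms(3) by (simp add: sigma_hP_def beta_pt_def piece_def)
qed

locale increasing_homeomorphism =
  fixes \<phi> \<psi> :: "real \<Rightarrow> real"
  assumes homeomorphism: "homeomorphism Xs Xs \<phi> \<psi>"
    and strict_mono: "strict_mono_on Xs \<phi>"
begin

lemma mem_Xs: "x \<in> Xs \<Longrightarrow> \<phi> x \<in> Xs"
  and inverse: "x \<in> Xs \<Longrightarrow> \<psi> (\<phi> x) = x"
  and image_Xs: "\<phi> ` Xs = Xs"
  using homeomorphism by (auto simp: homeomorphism_def)

lemma less_iff: "x \<in> Xs \<Longrightarrow> y \<in> Xs \<Longrightarrow> \<phi> x < \<phi> y \<longleftrightarrow> x < y"
  using strict_mono_on_less[OF strict_mono] .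

lemma le_iff: "x \<in> Xs \<Longrightarrow> y \<in> Xs \<Longrightarrow> \<phi> x \<le> \<phi> y \<longleftrightarrow> x \<le> y"
  using strict_mono_on_less_eq[OF strict_mono] .

lemma inj_on_Xs: "inj_on \<phi> Xs"
  using inverse by (metis inj_onI)

lemma zero: "\<phi> 0 = 0"
proof -
  have "0 \<in> Xs"
    by (simp add: Xs_def)
  then obtain y where y: "y \<in> Xs" "\<phi> y = 0"
    using image_Xs by (metis imageE)
  then have "\<phi> 0 \<le> 0"
    using le_iff[OF \<open>0 \<in> Xs\<close> y(1)] by (auto simp: Xs_def)
  moreover have "0 \<le> \<phi> 0"
    using mem_Xs[OF \<open>0 \<in> Xs\<close>] by (simp add: Xs_def)
  ultimately show ?thesis
    by simp
qed

lemma mem_interior: "x \<in> {0<..<1} \<Longrightarrow> \<phi> x \<in> {0<..<1}"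
  using less_iff[of 0 x] mem_Xs[of x] zero by (auto simp: Xs_def)

lemma inverse_increasing: "increasing_homeomorphism \<psi> \<phi>"
proof
  show "homeomorphism Xs Xs \<psi> \<phi>"
    using homeomorphism by (rule homeomorphism_symD)
  show "strict_mono_on Xs \<psi>"
  proof (rule strict_mono_onI)
    fix r s
    assume "r \<in> Xs" "s \<in> Xs" "r < s"
    moreover have "\<psi> r \<in> Xs" "\<psi> s \<in> Xs" "\<phi> (\<psi> r) = r" "\<phi> (\<psi> s) = s"
      using homeomorphism \<open>r \<in> Xs\<close> \<open>s \<in> Xs\<close> by (auto simp: homeomorphism_def)
    ultimately show "\<psi> r < \<psi> s"
      using less_iff[of "\<psi> r" "\<psi> s"] by simp
  qed
qed

lemmas inv_mem_Xs = increasing_homeomorphism.mem_Xs[OF inverse_increasing]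
  and inv_inj_on_Xs = increasing_homeomorphism.inj_on_Xs[OF inverse_increasing]
  and inv_inverse = increasing_homeomorphism.inverse[OF inverse_increasing]
  and inv_less_iff = increasing_homeomorphism.less_iff[OF inverse_increasing]
  and inv_le_iff = increasing_homeomorphism.le_iff[OF inverse_increasing]
  and inv_zero = increasing_homeomorphism.zero[OF inverse_increasing]
  and inv_mem_interior = increasing_homeomorphism.mem_interior[OF inverse_increasing]

lemma homeomorphism_interior: "homeomorphism {0<..<1} {0<..<1} \<phi> \<psi>"
proof -
  have "\<phi> ` {0<..<1} = {0<..<1}"
  proof
    show "\<phi> ` {0<..<1} \<subseteq> {0<..<1}"
      using mem_interior by blast
    show "{0<..<1} \<subseteq> \<phi> ` {0<..<1}"
    proof
      fix y :: real
      assume "y \<in> {0<..<1}"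
      then have "\<psi> y \<in> {0<..<1}" "\<phi> (\<psi> y) = y"
        using inv_mem_interior inv_inverse by (auto simp: Xs_def)
      then show "y \<in> \<phi> ` {0<..<1}"
        by (metis image_eqI)
    qed
  qed
  moreover have "{0<..<1} \<subseteq> Xs"
    by (auto simp: Xs_def)
  ultimately show ?thesis
    using homeomorphism_of_subsets[OF homeomorphism _ order_refl] by blast
qed

lemma discont_comp_left:
  assumes "h ` Xs \<subseteq> Xs"
  shows "discont (\<phi> \<circ> h) = discont h"
proof -
  have "h ` {0<..<1} \<subseteq> Xs"
    using assms by (auto simp: Xs_def)
  then have "isCont (\<phi> \<circ> h) x \<longleftrightarrow> isCont h x" if "x \<in> {0<..<1}" for x
    using isCont_homeomorphism_comp_iff[OF homeomorphism _ that] by simp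
  then show ?thesis
    by (auto simp: discont_def)
qed

lemma discont_comp_right: "discont (h \<circ> \<phi>) = \<psi> ` discont h"
proof -
  have cont: "isCont (h \<circ> \<phi>) x \<longleftrightarrow> isCont h (\<phi> x)" if "x \<in> {0<..<1}" for x
    using isCont_comp_homeomorphism_iff[OF homeomorphism_interior _ _ that] by simp
  show ?thesis
  proof
    show "discont (h \<circ> \<phi>) \<subseteq> \<psi> ` discont h"
    proof
      fix x
      assume x: "x \<in> discont (h \<circ> \<phi>)"
      then have "x \<in> {0<..<1}" "\<not> isCont (h \<circ> \<phi>) x"
        by (auto simp: discont_def)
      then have "\<phi> x \<in> discont h" and "x = \<psi> (\<phi> x)"
        using cont mem_interior inverse[of x] by (auto simp: discont_def Xs_def)
      then show "x \<in> \<psi> ` discont h"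
        by blast
    qed
    show "\<psi> ` discont h \<subseteq> discont (h \<circ> \<phi>)"
    proof
      fix x
      assume "x \<in> \<psi> ` discont h"
      then obtain y where y: "y \<in> {0<..<1}" "\<not> isCont h y" "x = \<psi> y"
        by (auto simp: discont_def)
      then have "x \<in> {0<..<1}" "\<phi> x = y"
        using inv_mem_interior inv_inverse[of y] by (auto simp: Xs_def)
      then show "x \<in> discont (h \<circ> \<phi>)"
        using cont y(2) by (simp add: discont_def)
    qed
  qed
qed

lemma Inf_image:
  assumes "A \<subseteq> Xs" and "A \<noteq> {}"
  shows "Inf (\<phi> ` A) = \<phi> (Inf A)"
proof (rule cInf_eq_non_empty)
  have bdd: "bdd_below A"
    using assms(1) by (intro bdd_belowI[of _ 0]) (auto simp: Xs_def)
  have Inf: "Inf A \<in> Xs"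
    using assms by (rule Inf_mem_Xs)
  show "\<phi> ` A \<noteq> {}"
    using assms(2) by blast
  show "\<phi> (Inf A) \<le> y" if "y \<in> \<phi> ` A" for y
  proof -
    obtain a where a: "a \<in> A" "y = \<phi> a"
      using \<open>y \<in> \<phi> ` A\<close> by blast
    then have "Inf A \<le> a" "a \<in> Xs"
      using cInf_lower[OF _ bdd] assms(1) by auto
    then show ?thesis
      using le_iff[OF Inf] a(2) by simp
  qed
  show "y \<le> \<phi> (Inf A)" if lower: "\<And>z. z \<in> \<phi> ` A \<Longrightarrow> y \<le> z" for y
  proof (cases "y < 0")
    case True
    then show ?thesis
      using mem_Xs[OF Inf] by (simp add: Xs_def)
  next
    case False
    have lower': "y \<le> \<phi> a" "\<phi> a \<in> Xs" if "a \<in> A" for a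
      using that assms(1) mem_Xs by (auto intro: lower)
    obtain a where "a \<in> A"
      using assms(2) by blast
    then have y: "y \<in> Xs"
      using False lower'[of a] by (auto simp: Xs_def)
    have "\<psi> y \<le> a" if "a \<in> A" for a
    proof -
      have "a \<in> Xs"
        using that assms(1) by blast
      then show ?thesis
        using inv_le_iff[OF y lower'(2)[OF that]] lower'(1)[OF that] inverse by simp
    qed
    then have "\<psi> y \<le> Inf A"
      using assms(2) by (intro cInf_greatest) auto
    then show ?thesis
      using le_iff[OF inv_mem_Xs[OF y] Inf] inv_inverse[OF y] by simp
  qed
qed

lemma is_partition_image:
  assumes "is_partition P"
  shows "is_partition (\<psi> ` P)"
proof -
  have "0 \<in> \<psi> ` P"
    using assms inv_zero by (metis image_eqI is_partition_def)
  moreover have "\<psi> ` P \<subseteq> Xs"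
    using assms inv_mem_Xs by (auto simp: is_partition_def)
  ultimately show ?thesis
    using assms by (simp add: is_partition_def)
qed

lemma piece_image:
  assumes P: "is_partition P" and a: "a \<in> P"
  shows "\<phi> ` piece (\<psi> ` P) (\<psi> a) = piece P a"
proof -
  have fin: "finite P" "P \<subseteq> Xs" "finite (\<psi> ` P)" "\<psi> ` P \<subseteq> Xs"
    using P inv_mem_Xs by (auto simp: is_partition_def)
  have mem: "y \<in> piece (\<psi> ` P) (\<psi> a) \<longleftrightarrow> \<phi> y \<in> piece P a" if y: "y \<in> Xs" for y
  proof -
    have "a \<in> Xs"
      using a fin(2) by blast
    then have "\<psi> a < y \<longleftrightarrow> a < \<phi> y"
      using inv_less_iff[OF _ mem_Xs[OF y]] inverse[OF y] by simp
    moreover have "\<forall>p\<in>P. y < \<psi> p \<longleftrightarrow> \<phi> y < p"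
      using less_iff[OF y inv_mem_Xs] inv_inverse fin(2) by auto
    moreover have "\<forall>p\<in>P. \<psi> a < \<psi> p \<longleftrightarrow> a < p"
      using inv_less_iff \<open>a \<in> Xs\<close> fin(2) by blast
    moreover have "y < 1" "\<phi> y < 1"
      using y mem_Xs[OF y] by (auto simp: Xs_def)
    ultimately show ?thesis
      using mem_piece_iff[OF fin(1,2)] mem_piece_iff[OF fin(3,4)] by auto
  qed
  show ?thesis
  proof
    show "\<phi> ` piece (\<psi> ` P) (\<psi> a) \<subseteq> piece P a"
      using mem piece_subset_Xs[OF is_partition_image[OF P]] a by blast
    show "piece P a \<subseteq> \<phi> ` piece (\<psi> ` P) (\<psi> a)"
    proof
      fix z
      assume z: "z \<in> piece P a"
      then have "z \<in> Xs"
        using piece_subset_Xs[OF P a] by blast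
      then show "z \<in> \<phi> ` piece (\<psi> ` P) (\<psi> a)"
        using mem[of "\<psi> z"] z inv_mem_Xs inv_inverse by (metis image_eqI)
    qed
  qed
qed

lemma strict_antimono_on_comp_right:
  assumes "S \<subseteq> Xs"
  shows "strict_antimono_on S (h \<circ> \<phi>) \<longleftrightarrow> strict_antimono_on (\<phi> ` S) h"
  using assms less_iff by (auto simp: monotone_on_def subset_iff)

lemma strict_antimono_on_comp_left:
  assumes "h ` S \<subseteq> Xs"
  shows "strict_antimono_on S (\<phi> \<circ> h) \<longleftrightarrow> strict_antimono_on S h"
  using assms less_iff by (auto simp: monotone_on_def subset_iff)

lemma R_hP_comp_right:
  assumes "is_partition P"
  shows "R_hP (h \<circ> \<phi>) (\<psi> ` P) = R_hP h P"
proof -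
  have "P \<subseteq> Xs"
    using assms by (simp add: is_partition_def)
  then have inj: "inj_on \<psi> P"
    using inj_on_subset[OF inv_inj_on_Xs] by blast
  have "strict_antimono_on (piece (\<psi> ` P) (\<psi> a)) (h \<circ> \<phi>) \<longleftrightarrow> strict_antimono_on (piece P a) h"
    if "a \<in> P" for a
    using strict_antimono_on_comp_right[OF piece_subset_Xs[OF is_partition_image[OF assms] imageI[OF that]]]
      piece_image[OF assms that] by simp
  then have "{b \<in> \<psi> ` P. strict_antimono_on (piece (\<psi> ` P) b) (h \<circ> \<phi>)}
      = \<psi> ` {a \<in> P. strict_antimono_on (piece P a) h}"
    by auto
  then show ?thesis
    using inj by (simp add: R_hP_eq card_image inj_on_subset)
qed

lemma sigma_hP_comp_right:
  assumes P: "is_partition P" and inj: "inj_on h Xs"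
  shows "sigma_hP (h \<circ> \<phi>) (\<psi> ` P) = sigma_hP h P"
proof
  fix x
  have PX: "P \<subseteq> Xs"
    using P by (simp add: is_partition_def)
  have image: "(h \<circ> \<phi>) ` \<psi> ` P = h ` P"
    using PX inv_inverse by (force simp: image_comp)
  show "sigma_hP (h \<circ> \<phi>) (\<psi> ` P) x = sigma_hP h P x"
  proof (cases "x \<in> h ` P")
    case False
    then have "x \<notin> (h \<circ> \<phi>) ` \<psi> ` P"
      using image by simp
    then show ?thesis
      using False by (simp add: sigma_hP_def)
  next
    case True
    then obtain a where a: "a \<in> P" "x = h a"
      by blast
    have "inj_on (h \<circ> \<phi>) Xs"
      using inj inj_on_Xs image_Xs by (simp add: comp_inj_on)
    moreover have "\<psi> ` P \<subseteq> Xs" "\<psi> a \<in> \<psi> ` P" "(h \<circ> \<phi>) (\<psi> a) = x"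
      using a PX inv_inverse inv_mem_Xs by auto
    ultimately have "sigma_hP (h \<circ> \<phi>) (\<psi> ` P) x = Inf ((h \<circ> \<phi>) ` piece (\<psi> ` P) (\<psi> a))"
      using sigma_hP_apply by metis
    also have "\<dots> = Inf (h ` piece P a)"
      unfolding image_comp[symmetric] piece_image[OF P a(1)] ..
    also have "\<dots> = sigma_hP h P x"
      using sigma_hP_apply[OF inj PX a(1)] a(2) by simp
    finally show ?thesis .
  qed
qed

lemma eps_hP_comp_right:
  assumes "is_partition P" and "inj_on h Xs"
  shows "eps_hP (h \<circ> \<phi>) (\<psi> ` P) = eps_hP h P"
  using R_hP_comp_right[OF assms(1)] sigma_hP_comp_right[OF assms] by (simp add: eps_hP_def)

text \<open>\<open>\<sigma>\<close> is a function on all of the reals, so \<open>\<phi>\<close> is extended by the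
  identity to a bijection it can be conjugated by.\<close>

definition extension :: "real \<Rightarrow> real" where
  "extension x = (if x \<in> Xs then \<phi> x else x)"

lemma bij_extension: "bij extension"
proof (rule bij_betw_byWitness[where f' = "\<lambda>y. if y \<in> Xs then \<psi> y else y"])
  show "\<forall>x\<in>UNIV. (if extension x \<in> Xs then \<psi> (extension x) else extension x) = x"
    using mem_Xs inverse by (simp add: extension_def)
  show "\<forall>y\<in>UNIV. extension (if y \<in> Xs then \<psi> y else y) = y"
    using inv_mem_Xs inv_inverse by (simp add: extension_def)
qed auto

lemma sigma_hP_comp_left:
  assumes P: "is_partition P" and maps: "h ` Xs \<subseteq> Xs" and inj: "inj_on h Xs"
  shows "sigma_hP (\<phi> \<circ> h) P \<circ> extension = extension \<circ> sigma_hP h P"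
proof
  fix x
  have PX: "P \<subseteq> Xs"
    using P by (simp add: is_partition_def)
  have inj': "inj_on (\<phi> \<circ> h) Xs"
    using inj inj_on_Xs maps by (simp add: comp_inj_on inj_on_subset)
  show "(sigma_hP (\<phi> \<circ> h) P \<circ> extension) x = (extension \<circ> sigma_hP h P) x"
  proof (cases "x \<in> h ` P")
    case False
    have "extension x \<notin> (\<phi> \<circ> h) ` P"
    proof
      assume "extension x \<in> (\<phi> \<circ> h) ` P"
      then obtain p where "p \<in> P" "extension x = \<phi> (h p)"
        by auto
      moreover have "h p \<in> Xs"
        using \<open>p \<in> P\<close> PX maps by blast
      ultimately have "x = h p"
        using mem_Xs inverse inj_on_Xs by (auto simp: extension_def split: if_splits dest: inj_onD)
      then show False
        using False \<open>p \<in> P\<close> by blast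
    qed
    then show ?thesis
      using False by (simp add: sigma_hP_def)
  next
    case True
    then obtain a where a: "a \<in> P" "x = h a"
      by blast
    have "piece P a \<subseteq> Xs" "piece P a \<noteq> {}"
      using piece_subset_Xs[OF P a(1)] piece_nonempty[OF P a(1)] .
    then have "h ` piece P a \<subseteq> Xs" "h ` piece P a \<noteq> {}"
      using maps by auto
    then have "Inf ((\<phi> \<circ> h) ` piece P a) = \<phi> (Inf (h ` piece P a))"
      unfolding image_comp[symmetric] by (rule Inf_image)
    also have "\<dots> = extension (Inf (h ` piece P a))"
      using Inf_mem_Xs[OF \<open>h ` piece P a \<subseteq> Xs\<close> \<open>h ` piece P a \<noteq> {}\<close>]
      by (simp add: extension_def)
    finally have "Inf ((\<phi> \<circ> h) ` piece P a) = extension (Inf (h ` piece P a))" .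
    moreover have "extension x = (\<phi> \<circ> h) a"
      using a PX maps by (auto simp: extension_def)
    ultimately show ?thesis
      using sigma_hP_apply[OF inj' PX a(1)] sigma_hP_apply[OF inj PX a(1)] a(2) by simp
  qed
qed

lemma eps_hP_comp_left:
  assumes "is_partition P" and "h ` Xs \<subseteq> Xs" and "inj_on h Xs"
  shows "eps_hP (\<phi> \<circ> h) P = eps_hP h P"
proof -
  have "strict_antimono_on (piece P a) (\<phi> \<circ> h) \<longleftrightarrow> strict_antimono_on (piece P a) h"
    if "a \<in> P" for a
    using strict_antimono_on_comp_left piece_subset_Xs[OF assms(1) that] assms(2) by blast
  then have "R_hP (\<phi> \<circ> h) P = R_hP h P"
    unfolding R_hP_eq by (metis (no_types, lifting) Collect_cong)
  moreover have "evenperm (sigma_hP (\<phi> \<circ> h) P) = evenperm (sigma_hP h P)"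
    using evenperm_conj[OF bij_extension sigma_hP_comp_left[OF assms]] .
  ultimately show ?thesis
    by (simp add: eps_hP_def sgn2_def)
qed

end

theorem lemma3p7:
  fixes h \<phi> :: "real \<Rightarrow> real"
  assumes "PCbow h"
    and "\<exists>\<psi>. homeomorphism Xs Xs \<phi> \<psi>"
    and "strict_mono_on Xs \<phi>"
  shows "eps (h \<circ> \<phi>) = eps h \<and> eps h = eps (\<phi> \<circ> h)"
proof -
  obtain \<psi> where "homeomorphism Xs Xs \<phi> \<psi>"
    using assms(2) by blast
  then interpret increasing_homeomorphism \<phi> \<psi>
    using assms(3) by unfold_locales
  have maps: "h ` Xs \<subseteq> Xs" and inj: "inj_on h Xs"
    using assms(1) by (auto simp: PCbow_def bij_betw_def)
  have fin: "finite (discont h)"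
    using assms(1) by (rule finite_discont)
  define P where "P = insert 0 (discont h)"
  have P: "is_partition P"
    using is_partition_discont[OF fin] by (simp add: P_def)
  have "Pmin h = P"
    using Pmin_eq[OF fin] by (simp add: P_def)
  moreover have "Pmin (h \<circ> \<phi>) = \<psi> ` P"
    using Pmin_eq[of "h \<circ> \<phi>"] fin by (simp add: discont_comp_right inv_zero P_def)
  moreover have "Pmin (\<phi> \<circ> h) = P"
    using Pmin_eq[of "\<phi> \<circ> h"] fin by (simp add: discont_comp_left[OF maps] P_def)
  ultimately show ?thesis
    using eps_hP_comp_right[OF P inj] eps_hP_comp_left[OF P maps inj] by (simp add: eps_def)
qed

end
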